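(* Let $\mathbb{F}_2$ be the free group on two generators $x$ and $y$, and let $m,n$ be integers. Then the commutator $[x^m,y^n]=x^my^nx^{-m}y^{-n}$ is a product of two squares in $\mathbb{F}_2$ (i.e. $[x^m,y^n]=a^2b^2$ for some $a,b\in\mathbb{F}_2$) if and only if $mn$ is even.
   Context: For elements $g,h$ of a group, $[g,h]=ghg^{-1}h^{-1}$. *)

theory Defs
  imports "HOL-Algebra.Group"
begin

text \<open>Free group on two generators, built from reduced words.
  A letter is a pair (inverted, generator): generator False is x, True is y;
  inverted = True means the inverse of the generator.\<close>

type_synonym letter2 = "bool \<times> bool"

definition inv_letter :: "letter2 \<Rightarrow> letter2" where
  "inv_letter l = (\<not> fst l, snd l)"

fun reduced :: "letter2 list \<Rightarrow> bool" where
  "reduced [] = True"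
| "reduced [a] = True"
| "reduced (a # b # w) = (b \<noteq> inv_letter a \<and> reduced (b # w))"

definition reduce :: "letter2 list \<Rightarrow> letter2 list" where
  "reduce w = foldr (\<lambda>l acc. case acc of [] \<Rightarrow> [l]
                 | h # t \<Rightarrow> (if h = inv_letter l then t else l # acc)) w []"

definition F2 :: "letter2 list monoid" where
  "F2 = \<lparr> carrier = {w. reduced w}, mult = (\<lambda>a b. reduce (a @ b)), one = [] \<rparr>"

definition gen_x :: "letter2 list" where "gen_x = [(False, False)]"
definition gen_y :: "letter2 list" where "gen_y = [(False, True)]"

end

theory Submission
  imports Defs
begin

text \<open>If \<open>m = 2k\<close>, then in any group \<open>[x\<^sup>2\<^sup>k, h] = (x\<^sup>k)\<^sup>2 (h x\<^sup>-\<^sup>k h\<^sup>-\<^sup>1)\<^sup>2\<close>, and symmetrically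
  \<open>[g, y\<^sup>2\<^sup>l] = (g y\<^sup>l g\<^sup>-\<^sup>1)\<^sup>2 (y\<^sup>-\<^sup>l)\<^sup>2\<close> if \<open>n = 2l\<close>. Conversely, map \<open>F\<^sub>2\<close> to the integer
  Heisenberg group by \<open>x \<mapsto> (1,0,0)\<close>, \<open>y \<mapsto> (0,1,0)\<close>: the commutator \<open>[x\<^sup>m, y\<^sup>n]\<close> goes to
  the central element \<open>(0,0,mn)\<close>, whereas a product \<open>p\<^sup>2 q\<^sup>2\<close> of two squares can only be
  central if its central coordinate is even.\<close>

lemma (in group) int_pow_double:
  "x \<in> carrier G \<Longrightarrow> x [^] (2 * k :: int) = x [^] k \<otimes> x [^] k"
  unfolding mult_2 by (rule int_pow_mult)

lemma (in group) commutator_square_left: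
  assumes "a \<in> carrier G" "h \<in> carrier G"
  shows "a \<otimes> a \<otimes> h \<otimes> inv (a \<otimes> a) \<otimes> inv h
       = a \<otimes> a \<otimes> (h \<otimes> inv a \<otimes> inv h) \<otimes> (h \<otimes> inv a \<otimes> inv h)"
  using assms by (simp add: m_assoc inv_mult_group) (simp add: m_assoc [symmetric])

lemma (in group) commutator_square_right:
  assumes "g \<in> carrier G" "b \<in> carrier G"
  shows "g \<otimes> (b \<otimes> b) \<otimes> inv g \<otimes> inv (b \<otimes> b)
       = (g \<otimes> b \<otimes> inv g) \<otimes> (g \<otimes> b \<otimes> inv g) \<otimes> inv b \<otimes> inv b"
  using assms by (simp add: m_assoc inv_mult_group) (simp add: m_assoc [symmetric])

lemma (in group) commutator_int_pow_two_squares: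
  fixes m n :: int
  assumes x: "x \<in> carrier G" and y: "y \<in> carrier G" and even: "even (m * n)"
  shows "\<exists>a\<in>carrier G. \<exists>b\<in>carrier G.
           x [^] m \<otimes> y [^] n \<otimes> x [^] (- m) \<otimes> y [^] (- n) = a \<otimes> a \<otimes> b \<otimes> b"
proof -
  from even consider k where "m = 2 * k" | l where "n = 2 * l"
    by (auto elim!: evenE)
  then show ?thesis
  proof cases
    case 1
    have "x [^] m \<otimes> y [^] n \<otimes> x [^] (- m) \<otimes> y [^] (- n)
        = x [^] k \<otimes> x [^] k \<otimes> (y [^] n \<otimes> inv (x [^] k) \<otimes> inv (y [^] n))
            \<otimes> (y [^] n \<otimes> inv (x [^] k) \<otimes> inv (y [^] n))"
      unfolding int_pow_neg[OF x] int_pow_neg[OF y] 1 int_pow_double[OF x]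
      using x y by (rule commutator_square_left[OF int_pow_closed int_pow_closed])
    then show ?thesis using x y by fastforce
  next
    case 2
    have "x [^] m \<otimes> y [^] n \<otimes> x [^] (- m) \<otimes> y [^] (- n)
        = x [^] m \<otimes> y [^] l \<otimes> inv (x [^] m) \<otimes> (x [^] m \<otimes> y [^] l \<otimes> inv (x [^] m))
            \<otimes> inv (y [^] l) \<otimes> inv (y [^] l)"
      unfolding int_pow_neg[OF x] int_pow_neg[OF y] 2 int_pow_double[OF y]
      using x y by (rule commutator_square_right[OF int_pow_closed int_pow_closed])
    then show ?thesis using x y by fastforce
  qed
qed

definition reduce_step :: "letter2 \<Rightarrow> letter2 list \<Rightarrow> letter2 list" where
  "reduce_step l w = (case w of [] \<Rightarrow> [l] | h # t \<Rightarrow> (if h = inv_letter l then t else l # w))"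

lemma reduce_eq_foldr: "reduce w = foldr reduce_step w []"
  unfolding reduce_def reduce_step_def by simp

lemma inv_letter_inv_letter [simp]: "inv_letter (inv_letter l) = l"
  by (simp add: inv_letter_def)

lemma reduced_ConsD: "reduced (h # t) \<Longrightarrow> reduced t"
  by (cases t) auto

lemma reduced_reduce_step: "reduced w \<Longrightarrow> reduced (reduce_step l w)"
  by (cases w) (auto simp: reduce_step_def dest: reduced_ConsD)

lemma reduced_foldr_reduce_step: "reduced w \<Longrightarrow> reduced (foldr reduce_step v w)"
  by (induction v) (auto intro: reduced_reduce_step)

lemma foldr_reduce_step_reduced: "reduced w \<Longrightarrow> foldr reduce_step w [] = w"
  by (induction w rule: reduced.induct) (auto simp: reduce_step_def)

lemma reduce_step_inv_letter_cancel:
  assumes "reduced w"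
  shows "reduce_step l (reduce_step (inv_letter l) w) = w"
proof (cases w)
  case (Cons h t)
  with assms show ?thesis
    by (cases "h = l"; cases t) (auto simp: reduce_step_def)
qed (simp add: reduce_step_def)

lemma foldr_reduce_step_reduce_step:
  assumes "reduced v" "reduced w"
  shows "foldr reduce_step (reduce_step l v) w = reduce_step l (foldr reduce_step v w)"
proof (cases v)
  case (Cons h t)
  show ?thesis
  proof (cases "h = inv_letter l")
    case True
    have "reduced (foldr reduce_step t w)"
      using assms(2) by (rule reduced_foldr_reduce_step)
    with Cons True show ?thesis
      by (simp add: reduce_step_inv_letter_cancel) (simp add: reduce_step_def)
  next
    case False
    with Cons show ?thesis
      by (simp add: reduce_step_def)
  qed
qed (simp add: reduce_step_def)

lemma foldr_reduce_step_reduce: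
  "reduced w \<Longrightarrow> foldr reduce_step (reduce v) w = foldr reduce_step v w"
proof (induction v)
  case (Cons l v)
  have "reduced (foldr reduce_step v [])"
    by (simp add: reduced_foldr_reduce_step)
  with Cons show ?case
    by (simp add: reduce_eq_foldr foldr_reduce_step_reduce_step)
qed (simp add: reduce_eq_foldr)

definition word_inv :: "letter2 list \<Rightarrow> letter2 list" where
  "word_inv w = rev (map inv_letter w)"

lemma foldr_word_inv_cancel:
  "reduced w \<Longrightarrow> foldr reduce_step (word_inv v) (foldr reduce_step v w) = w"
proof (induction v)
  case (Cons l v)
  have "reduced (foldr reduce_step v w)"
    using Cons.prems by (rule reduced_foldr_reduce_step)
  then show ?case
    using reduce_step_inv_letter_cancel[of _ "inv_letter l"] Cons by (simp add: word_inv_def)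
qed (simp add: word_inv_def)

lemma carrier_F2: "carrier F2 = {w. reduced w}"
  by (simp add: F2_def)

lemma F2_mult_eq_foldr: "reduced w \<Longrightarrow> v \<otimes>\<^bsub>F2\<^esub> w = foldr reduce_step v w"
  by (simp add: F2_def reduce_eq_foldr foldr_reduce_step_reduced)

lemma group_F2: "group F2"
proof (rule groupI)
  fix u v w
  assume "u \<in> carrier F2" "v \<in> carrier F2" "w \<in> carrier F2"
  then have reduced: "reduced u" "reduced v" "reduced w"
    by (simp_all add: carrier_F2)
  have "u \<otimes>\<^bsub>F2\<^esub> v \<otimes>\<^bsub>F2\<^esub> w = foldr reduce_step (reduce (u @ v)) w"
    using reduced by (simp add: F2_def reduce_eq_foldr foldr_reduce_step_reduced)
  also have "\<dots> = foldr reduce_step u (foldr reduce_step v w)"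
    using reduced by (simp add: foldr_reduce_step_reduce)
  also have "\<dots> = u \<otimes>\<^bsub>F2\<^esub> (v \<otimes>\<^bsub>F2\<^esub> w)"
    using reduced by (simp add: F2_mult_eq_foldr reduced_foldr_reduce_step)
  finally show "u \<otimes>\<^bsub>F2\<^esub> v \<otimes>\<^bsub>F2\<^esub> w = u \<otimes>\<^bsub>F2\<^esub> (v \<otimes>\<^bsub>F2\<^esub> w)" .
next
  fix w
  assume "w \<in> carrier F2"
  then have "reduced w"
    by (simp add: carrier_F2)
  then have "reduce (word_inv w) \<otimes>\<^bsub>F2\<^esub> w = []"
    using foldr_word_inv_cancel[of "[]" w]
    by (simp add: F2_mult_eq_foldr foldr_reduce_step_reduce foldr_reduce_step_reduced)
  moreover have "reduce (word_inv w) \<in> carrier F2"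
    by (simp add: carrier_F2 reduce_eq_foldr reduced_foldr_reduce_step)
  ultimately show "\<exists>v\<in>carrier F2. v \<otimes>\<^bsub>F2\<^esub> w = \<one>\<^bsub>F2\<^esub>"
    by (auto simp: F2_def)
qed (auto simp: F2_def reduce_eq_foldr reduced_foldr_reduce_step foldr_reduce_step_reduced)

lemma gens_carrier_F2: "gen_x \<in> carrier F2" "gen_y \<in> carrier F2"
  by (simp_all add: carrier_F2 gen_x_def gen_y_def)

text \<open>\<open>(a, b, c)\<close> stands for the unitriangular matrix \<open>[[1, a, c], [0, 1, b], [0, 0, 1]]\<close>.\<close>

fun heis_mult :: "int \<times> int \<times> int \<Rightarrow> int \<times> int \<times> int \<Rightarrow> int \<times> int \<times> int" where
  "heis_mult (a, b, c) (a', b', c') = (a + a', b + b', c + c' + a * b')"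

definition heis :: "(int \<times> int \<times> int) monoid" where
  "heis = \<lparr>carrier = UNIV, mult = heis_mult, one = (0, 0, 0)\<rparr>"

lemma heis_mult_assoc: "heis_mult (heis_mult p q) r = heis_mult p (heis_mult q r)"
  by (cases p; cases q; cases r) (simp add: algebra_simps)

lemma heis_mult_zero [simp]: "heis_mult (0, 0, 0) p = p" "heis_mult p (0, 0, 0) = p"
  by (cases p; simp)+

lemma group_heis: "group heis"
proof (rule groupI)
  fix p :: "int \<times> int \<times> int"
  obtain a b c where "p = (a, b, c)"
    by (cases p)
  then show "\<exists>q\<in>carrier heis. q \<otimes>\<^bsub>heis\<^esub> p = \<one>\<^bsub>heis\<^esub>"
    by (intro bexI[of _ "(- a, - b, a * b - c)"]) (auto simp: heis_def)
qed (auto simp: heis_def heis_mult_assoc)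

lemma heis_inv: "inv\<^bsub>heis\<^esub> (a, b, c) = (- a, - b, a * b - c)"
  by (rule group.inv_equality[OF group_heis]) (auto simp: heis_def)

lemma heis_nat_pow_x: "(a, 0, 0) [^]\<^bsub>heis\<^esub> (k :: nat) = (int k * a, 0, 0)"
  by (induction k) (simp_all add: heis_def algebra_simps)

lemma heis_nat_pow_y: "(0, b, 0) [^]\<^bsub>heis\<^esub> (k :: nat) = (0, int k * b, 0)"
  by (induction k) (simp_all add: heis_def algebra_simps)

lemma heis_int_pow_x: "(1, 0, 0) [^]\<^bsub>heis\<^esub> (k :: int) = (k, 0, 0)"
  by (simp add: int_pow_def2 heis_nat_pow_x heis_inv)

lemma heis_int_pow_y: "(0, 1, 0) [^]\<^bsub>heis\<^esub> (k :: int) = (0, k, 0)"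
  by (simp add: int_pow_def2 heis_nat_pow_y heis_inv)

lemma heis_two_squares_central_even:
  assumes "heis_mult (heis_mult (heis_mult p p) q) q = (0, 0, c)"
  shows "even c"
proof -
  obtain a1 a2 a3 b1 b2 b3 where "p = (a1, a2, a3)" "q = (b1, b2, b3)"
    by (cases p; cases q)
  with assms have "b1 = - a1" "b2 = - a2" "c = 2 * a3 + 2 * b3 + a1 * a2 + 2 * a1 * b2 + (2 * a1 + b1) * b2"
    by (auto simp: algebra_simps)
  then have "c = 2 * (a3 + b3 - a1 * a2)"
    by (simp add: algebra_simps)
  then show ?thesis
    by simp
qed

definition letter_heis :: "letter2 \<Rightarrow> int \<times> int \<times> int" where
  "letter_heis l = (let e = if fst l then -1 else 1 in if snd l then (0, e, 0) else (e, 0, 0))"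

definition word_heis :: "letter2 list \<Rightarrow> int \<times> int \<times> int" where
  "word_heis w = foldr (\<lambda>l. heis_mult (letter_heis l)) w (0, 0, 0)"

lemma word_heis_Nil [simp]: "word_heis [] = (0, 0, 0)"
  and word_heis_Cons [simp]: "word_heis (l # w) = heis_mult (letter_heis l) (word_heis w)"
  by (simp_all add: word_heis_def)

lemma word_heis_append: "word_heis (v @ w) = heis_mult (word_heis v) (word_heis w)"
  by (induction v) (simp_all add: heis_mult_assoc)

lemma word_heis_reduce_step: "word_heis (reduce_step l w) = heis_mult (letter_heis l) (word_heis w)"
proof (cases w)
  case (Cons h t)
  have "heis_mult (letter_heis l) (letter_heis (inv_letter l)) = (0, 0, 0)"
    by (cases l) (auto simp: letter_heis_def inv_letter_def)
  with Cons show ?thesis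
    by (auto simp: reduce_step_def simp flip: heis_mult_assoc)
qed (simp add: reduce_step_def)

lemma word_heis_reduce: "word_heis (reduce w) = word_heis w"
  by (induction w) (simp_all add: reduce_eq_foldr word_heis_reduce_step)

lemma word_heis_hom: "word_heis \<in> hom F2 heis"
  by (auto simp: hom_def F2_def heis_def word_heis_reduce word_heis_append)

lemma word_heis_gen_x_pow: "word_heis (gen_x [^]\<^bsub>F2\<^esub> (k :: int)) = (k, 0, 0)"
  using hom_int_pow[OF word_heis_hom gens_carrier_F2(1) group_F2 group_heis]
  by (simp add: gen_x_def letter_heis_def heis_int_pow_x)

lemma word_heis_gen_y_pow: "word_heis (gen_y [^]\<^bsub>F2\<^esub> (k :: int)) = (0, k, 0)"
  using hom_int_pow[OF word_heis_hom gens_carrier_F2(2) group_F2 group_heis]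
  by (simp add: gen_y_def letter_heis_def heis_int_pow_y)

lemma F2_commutator_two_squares_even:
  fixes m n :: int
  assumes "a \<in> carrier F2" "b \<in> carrier F2"
    and "gen_x [^]\<^bsub>F2\<^esub> m \<otimes>\<^bsub>F2\<^esub> gen_y [^]\<^bsub>F2\<^esub> n
           \<otimes>\<^bsub>F2\<^esub> gen_x [^]\<^bsub>F2\<^esub> (- m) \<otimes>\<^bsub>F2\<^esub> gen_y [^]\<^bsub>F2\<^esub> (- n)
         = a \<otimes>\<^bsub>F2\<^esub> a \<otimes>\<^bsub>F2\<^esub> b \<otimes>\<^bsub>F2\<^esub> b"
  shows "even (m * n)"
proof -
  interpret word_heis: group_hom F2 heis word_heis
    by (simp add: group_hom_def group_hom_axioms_def group_F2 group_heis word_heis_hom)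
  have "(0, 0, m * n) = word_heis (gen_x [^]\<^bsub>F2\<^esub> m \<otimes>\<^bsub>F2\<^esub> gen_y [^]\<^bsub>F2\<^esub> n
           \<otimes>\<^bsub>F2\<^esub> gen_x [^]\<^bsub>F2\<^esub> (- m) \<otimes>\<^bsub>F2\<^esub> gen_y [^]\<^bsub>F2\<^esub> (- n))"
    using gens_carrier_F2 by (simp add: word_heis_gen_x_pow word_heis_gen_y_pow heis_def)
  also have "\<dots> = heis_mult (heis_mult (heis_mult (word_heis a) (word_heis a)) (word_heis b)) (word_heis b)"
    using assms by (simp add: heis_def)
  finally show ?thesis
    by (intro heis_two_squares_central_even) simp
qed

theorem theorem1p1:
  fixes m n :: int
  shows "(\<exists>a\<in>carrier F2. \<exists>b\<in>carrier F2.
            gen_x [^]\<^bsub>F2\<^esub> m \<otimes>\<^bsub>F2\<^esub> gen_y [^]\<^bsub>F2\<^esub> n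
              \<otimes>\<^bsub>F2\<^esub> gen_x [^]\<^bsub>F2\<^esub> (- m) \<otimes>\<^bsub>F2\<^esub> gen_y [^]\<^bsub>F2\<^esub> (- n)
            = a \<otimes>\<^bsub>F2\<^esub> a \<otimes>\<^bsub>F2\<^esub> b \<otimes>\<^bsub>F2\<^esub> b)
         \<longleftrightarrow> even (m * n)"
  using F2_commutator_two_squares_even
    group.commutator_int_pow_two_squares[OF group_F2 gens_carrier_F2]
  by blast

end
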